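(* Each member of $\mathcal{G}_2$ is cycle-extendable.
   Context: A half biwheel is obtained from a path $P$ of even length (possibly a single vertex) with color classes $A,B$, whose ends $u,v$ lie in $A$, by adding a new vertex $h$ (the hub) adjacent to every vertex of $A$; $u,v$ are the corners. $\mathcal{G}_2$ (double half biwheels) consists of the graphs obtained from two disjoint half biwheels $H_0,H_1$, neither isomorphic to $K_2$, with hubs $h_0,h_1$ and corners $u_0,v_0$ and $u_1,v_1$ respectively, by adding the four edges $h_1h_0$, $v_1v_0$, $u_0h_1$ and $h_0u_1$. A matching covered graph (connected, at least two vertices, every edge in a perfect matching) is cycle-extendable if for every even cycle $C$ the graph $G-V(C)$ has a perfect matching. *)

theory Defs
  imports Main
begin

text \<open>Simple graphs are given by a vertex set V :: 'a set and an edge set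
E :: 'a set set (edges are two-element sets).\<close>

definition perfect_matching :: "'a set \<Rightarrow> 'a set set \<Rightarrow> 'a set set \<Rightarrow> bool" where
  "perfect_matching V E M \<longleftrightarrow> M \<subseteq> E \<and> (\<forall>e\<in>M. e \<subseteq> V) \<and> (\<forall>v\<in>V. \<exists>!e. e \<in> M \<and> v \<in> e)"

definition has_perfect_matching :: "'a set \<Rightarrow> 'a set set \<Rightarrow> bool" where
  "has_perfect_matching V E \<longleftrightarrow> (\<exists>M. perfect_matching V E M)"

definition graph_connected :: "'a set \<Rightarrow> 'a set set \<Rightarrow> bool" where
  "graph_connected V E \<longleftrightarrow>
     (\<forall>x\<in>V. \<forall>y\<in>V. (x, y) \<in> {(a, b). a \<in> V \<and> b \<in> V \<and> {a, b} \<in> E}\<^sup>*)"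

definition matching_covered :: "'a set \<Rightarrow> 'a set set \<Rightarrow> bool" where
  "matching_covered V E \<longleftrightarrow> graph_connected V E \<and> 2 \<le> card V \<and> finite V \<and>
     (\<forall>e\<in>E. \<exists>M. perfect_matching V E M \<and> e \<in> M)"

definition is_cycle :: "'a set \<Rightarrow> 'a set set \<Rightarrow> 'a list \<Rightarrow> bool" where
  "is_cycle V E c \<longleftrightarrow> distinct c \<and> 3 \<le> length c \<and> set c \<subseteq> V \<and>
     (\<forall>i < length c. {c ! i, c ! ((i + 1) mod length c)} \<in> E)"

definition is_even_cycle :: "'a set \<Rightarrow> 'a set set \<Rightarrow> 'a list \<Rightarrow> bool" where
  "is_even_cycle V E c \<longleftrightarrow> is_cycle V E c \<and> even (length c)"

definition del_vertices_edges :: "'a set set \<Rightarrow> 'a set \<Rightarrow> 'a set set" where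
  "del_vertices_edges E S = {e \<in> E. e \<inter> S = {}}"

definition cycle_extendable :: "'a set \<Rightarrow> 'a set set \<Rightarrow> bool" where
  "cycle_extendable V E \<longleftrightarrow> matching_covered V E \<and>
     (\<forall>c. is_even_cycle V E c \<longrightarrow>
        has_perfect_matching (V - set c) (del_vertices_edges E (set c)))"

text \<open>Half biwheel on path P = [p_0, ..., p_{2k}] (even length 2k, so odd
number of vertices) with hub h: path edges plus h joined to every p_i with i
even (colour class A containing the ends). Corners: hd P and last P.\<close>
definition hbw_edges :: "'a list \<Rightarrow> 'a \<Rightarrow> 'a set set" where
  "hbw_edges P h =
     {{P ! i, P ! (i + 1)} | i. i + 1 < length P} \<union> {{h, P ! i} | i. i < length P \<and> even i}"

definition is_half_biwheel_path :: "'a list \<Rightarrow> 'a \<Rightarrow> bool" where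
  "is_half_biwheel_path P h \<longleftrightarrow> distinct P \<and> odd (length P) \<and> h \<notin> set P"

text \<open>The class G_2 of double half biwheels (up to isomorphism, i.e. any
labelling of the vertices). Neither half biwheel is K_2, i.e. the path has
at least 3 vertices.\<close>
definition in_G2 :: "'a set \<Rightarrow> 'a set set \<Rightarrow> bool" where
  "in_G2 V E \<longleftrightarrow> (\<exists>P0 h0 P1 h1.
     is_half_biwheel_path P0 h0 \<and> is_half_biwheel_path P1 h1 \<and>
     3 \<le> length P0 \<and> 3 \<le> length P1 \<and>
     (set P0 \<union> {h0}) \<inter> (set P1 \<union> {h1}) = {} \<and>
     V = set P0 \<union> {h0} \<union> set P1 \<union> {h1} \<and>
     E = hbw_edges P0 h0 \<union> hbw_edges P1 h1 \<union>
         {{h1, h0}, {last P1, last P0}, {hd P0, h1}, {h0, hd P1}})"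

end

theory Submission
  imports Defs
begin

(* Let C be an even cycle and look at its trace on one of the two half biwheels, with path P and hub h.
   Every vertex of P on C uses exactly two of its three possible cycle edges (to its left, to its right,
   to the hub), so the path edges used by C are determined by the first one and by the at most two hub
   edges, which sit at even positions. Hence either C meets the half biwheel in an even number of
   vertices, namely in nothing or in the hub together with a segment of P between two even positions,
   and then the rest of the half biwheel has a perfect matching; or C meets it in an odd number of
   vertices, and then the edges of C leaving it follow a rigid pattern. As C is even, both sides are
   even or both are odd, and the two rigid patterns contradict each other at the edge between h0 and
   hd P1. Matching coveredness follows as well, because every edge lies on a 4-cycle. *)

lemma perfect_matching_Un:
  assumes M1: "perfect_matching V1 E M1" and M2: "perfect_matching V2 E M2" and "V1 \<inter> V2 = {}"
  shows "perfect_matching (V1 \<union> V2) E (M1 \<union> M2)"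
proof -
  have "\<exists>!e. e \<in> M1 \<union> M2 \<and> v \<in> e" if "v \<in> V1 \<union> V2" for v
  proof (cases "v \<in> V1")
    case True
    have "\<exists>!e. e \<in> M1 \<and> v \<in> e" using M1 True unfolding perfect_matching_def by simp
    moreover have "v \<notin> e" if "e \<in> M2" for e
      using that M2 True assms(3) unfolding perfect_matching_def by fast
    ultimately show ?thesis by auto
  next
    case False
    have "\<exists>!e. e \<in> M2 \<and> v \<in> e" using M2 False that unfolding perfect_matching_def by simp
    moreover have "v \<notin> e" if "e \<in> M1" for e
      using that M1 False unfolding perfect_matching_def by fast
    ultimately show ?thesis by auto
  qed
  then show ?thesis using M1 M2 unfolding perfect_matching_def by auto
qed

lemma perfect_matching_edge: "x \<noteq> y \<Longrightarrow> {x, y} \<in> E \<Longrightarrow> perfect_matching {x, y} E {{x, y}}"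
  unfolding perfect_matching_def by auto

lemma perfect_matching_mono: "perfect_matching V E M \<Longrightarrow> E \<subseteq> E' \<Longrightarrow> perfect_matching V E' M"
  unfolding perfect_matching_def by (meson subset_trans)

lemma has_perfect_matching_Un:
  "has_perfect_matching V1 E \<Longrightarrow> has_perfect_matching V2 E \<Longrightarrow> V1 \<inter> V2 = {}
    \<Longrightarrow> has_perfect_matching (V1 \<union> V2) E"
  unfolding has_perfect_matching_def by (metis perfect_matching_Un)

lemma has_perfect_matching_edge: "x \<noteq> y \<Longrightarrow> {x, y} \<in> E \<Longrightarrow> has_perfect_matching {x, y} E"
  unfolding has_perfect_matching_def by (metis perfect_matching_edge)

lemma has_perfect_matching_mono:
  "has_perfect_matching V E \<Longrightarrow> E \<subseteq> E' \<Longrightarrow> has_perfect_matching V E'"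
  unfolding has_perfect_matching_def by (metis perfect_matching_mono)

lemma has_perfect_matching_del_vertices:
  "has_perfect_matching V E \<Longrightarrow> V \<inter> S = {} \<Longrightarrow> has_perfect_matching V (del_vertices_edges E S)"
  unfolding has_perfect_matching_def perfect_matching_def del_vertices_edges_def by fast

lemma has_perfect_matching_path_segment:
  assumes "distinct P" and path: "\<And>t. Suc t < length P \<Longrightarrow> {P ! t, P ! Suc t} \<in> E"
    and "i \<le> j" "j \<le> length P" "even (j - i)"
  shows "has_perfect_matching ((!) P ` {i..<j}) E"
proof -
  obtain k where j: "j = i + 2 * k" using assms(3,5) by (metis evenE le_add_diff_inverse)
  have "has_perfect_matching ((!) P ` {i..<i + 2 * m}) E" if "i + 2 * m \<le> length P" for m
    using that
  proof (induction m)
    case 0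
    show ?case unfolding has_perfect_matching_def perfect_matching_def by auto
  next
    case (Suc m)
    let ?t = "i + 2 * m"
    have "{i..<i + 2 * Suc m} = {i..<?t} \<union> {?t, Suc ?t}" by auto
    then have split: "(!) P ` {i..<i + 2 * Suc m} = (!) P ` {i..<?t} \<union> {P ! ?t, P ! Suc ?t}"
      by auto
    have "has_perfect_matching {P ! ?t, P ! Suc ?t} E"
      using Suc.prems assms(1) path[of ?t] by (intro has_perfect_matching_edge) (auto simp: nth_eq_iff_index_eq)
    moreover have "(!) P ` {i..<?t} \<inter> {P ! ?t, P ! Suc ?t} = {}"
      using Suc.prems assms(1) by (auto simp: nth_eq_iff_index_eq)
    ultimately show ?case
      unfolding split using Suc by (intro has_perfect_matching_Un) auto
  qed
  then show ?thesis using assms(4) j by blast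
qed

lemma is_cycle_square:
  assumes "distinct [a, b, c, d]" "{a, b, c, d} \<subseteq> V"
    and "{a, b} \<in> E" "{b, c} \<in> E" "{c, d} \<in> E" "{d, a} \<in> E"
  shows "is_cycle V E [a, b, c, d]"
  using assms unfolding is_cycle_def by (auto simp: less_Suc_eq)

lemma perfect_matching_through_square:
  assumes "is_cycle V E [a, b, c, d]"
    and "has_perfect_matching (V - {a, b, c, d}) (del_vertices_edges E {a, b, c, d})"
    and "e \<in> {{a, b}, {b, c}, {c, d}, {d, a}}"
  shows "\<exists>M. perfect_matching V E M \<and> e \<in> M"
proof -
  have cyc: "distinct [a, b, c, d]" "{a, b, c, d} \<subseteq> V"
    "{a, b} \<in> E" "{b, c} \<in> E" "{c, d} \<in> E" "{d, a} \<in> E"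
    using assms(1) unfolding is_cycle_def by (auto simp: less_Suc_eq)
  obtain M0 where "perfect_matching (V - {a, b, c, d}) (del_vertices_edges E {a, b, c, d}) M0"
    using assms(2) unfolding has_perfect_matching_def by blast
  then have M0: "perfect_matching (V - {a, b, c, d}) E M0"
    by (rule perfect_matching_mono) (auto simp: del_vertices_edges_def)
  have V: "V = {a, b, c, d} \<union> (V - {a, b, c, d})" using cyc(2) by blast
  have extend: "\<exists>M. perfect_matching V E M \<and> {x, y} \<in> M \<and> {z, w} \<in> M"
    if "{x, y, z, w} = {a, b, c, d}" "x \<noteq> y" "z \<noteq> w" "{x, y} \<inter> {z, w} = {}"
      "{x, y} \<in> E" "{z, w} \<in> E" for x y z w
  proof -
    have "perfect_matching ({x, y} \<union> {z, w}) E ({{x, y}} \<union> {{z, w}})"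
      using that by (intro perfect_matching_Un perfect_matching_edge)
    then have "perfect_matching {a, b, c, d} E {{x, y}, {z, w}}"
      using that(1) by (simp add: insert_commute)
    then have "perfect_matching V E ({{x, y}, {z, w}} \<union> M0)"
      by (subst V, intro perfect_matching_Un[OF _ M0]) auto
    then show ?thesis by blast
  qed
  have "{a, b} \<inter> {c, d} = {}" "{b, c} \<inter> {d, a} = {}" using cyc(1) by auto
  then show ?thesis
    using assms(3) extend[of a b c d] extend[of b c d a] cyc by (auto simp: insert_commute)
qed

lemma graph_connectedI:
  assumes "\<And>x. x \<in> V \<Longrightarrow> (r, x) \<in> {(a, b). a \<in> V \<and> b \<in> V \<and> {a, b} \<in> E}\<^sup>*"
  shows "graph_connected V E"
proof -
  let ?R = "{(a, b). a \<in> V \<and> b \<in> V \<and> {a, b} \<in> E}"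
  have "sym (?R\<^sup>*)" by (rule sym_rtrancl) (auto simp: sym_def insert_commute)
  then show ?thesis
    unfolding graph_connected_def using assms by (meson rtrancl_trans symD)
qed

lemma mod_Suc_eq_iff:
  fixes i k L :: nat
  assumes "i < L" "k < L"
  shows "(i + 1) mod L = k \<longleftrightarrow> i = (k + L - 1) mod L"
  using assms by (cases "k = 0"; cases "i + 1 = L") (auto simp: mod_if)

lemma mod_Suc_neq_mod_pred:
  fixes k L :: nat
  assumes "k < L" "3 \<le> L"
  shows "(k + 1) mod L \<noteq> (k + L - 1) mod L"
  using assms by (cases "k = 0"; cases "k + 1 = L") (auto simp: mod_if)

definition cycle_neighbours :: "'a list \<Rightarrow> 'a \<Rightarrow> 'a set" where
  "cycle_neighbours c v = {u. \<exists>i<length c. {c ! i, c ! ((i + 1) mod length c)} = {v, u}}"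

lemma cycle_neighbours_sym: "u \<in> cycle_neighbours c v \<longleftrightarrow> v \<in> cycle_neighbours c u"
  unfolding cycle_neighbours_def by (simp add: insert_commute)

lemma cycle_neighbours_edge: "is_cycle V E c \<Longrightarrow> u \<in> cycle_neighbours c v \<Longrightarrow> {v, u} \<in> E"
  unfolding is_cycle_def cycle_neighbours_def by auto

lemma cycle_neighbours_notin:
  assumes "v \<notin> set c"
  shows "cycle_neighbours c v = {}"
proof -
  have "c ! i \<in> set c" "c ! ((i + 1) mod length c) \<in> set c" if "i < length c" for i
  proof -
    have "0 < length c" using that by linarith
    then have "(i + 1) mod length c < length c" by simp
    then show "c ! i \<in> set c" "c ! ((i + 1) mod length c) \<in> set c" using that by simp_all
  qed
  then show ?thesis using assms unfolding cycle_neighbours_def by (auto simp: doubleton_eq_iff)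
qed

lemma card_cycle_neighbours:
  assumes "is_cycle V E c" "v \<in> set c"
  shows "card (cycle_neighbours c v) = 2"
proof -
  define L where "L = length c"
  have "distinct c" "3 \<le> L" using assms(1) unfolding is_cycle_def L_def by auto
  then have inj: "c ! a = c ! b \<longleftrightarrow> a = b" if "a < L" "b < L" for a b
    using that unfolding L_def by (simp add: nth_eq_iff_index_eq)
  obtain k where k: "k < L" "v = c ! k" using assms(2) unfolding L_def by (metis in_set_conv_nth)
  define succ pred where "succ = (k + 1) mod L" and "pred = (k + L - 1) mod L"
  have "succ < L" "pred < L" using \<open>3 \<le> L\<close> unfolding succ_def pred_def by auto
  have "u \<in> cycle_neighbours c v \<longleftrightarrow> u = c ! succ \<or> u = c ! pred" for u
  proof -
    have "u \<in> cycle_neighbours c v \<longleftrightarrow>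
        (\<exists>i<L. (c ! i = v \<and> c ! ((i + 1) mod L) = u) \<or> (c ! i = u \<and> c ! ((i + 1) mod L) = v))"
      unfolding cycle_neighbours_def L_def by (auto simp: doubleton_eq_iff)
    also have "\<dots> \<longleftrightarrow> (\<exists>i<L. (i = k \<and> c ! ((i + 1) mod L) = u) \<or> (c ! i = u \<and> i = pred))"
    proof -
      have "c ! i = v \<longleftrightarrow> i = k" if "i < L" for i
        using inj[OF that k(1)] k(2) by simp
      moreover have "c ! ((i + 1) mod L) = v \<longleftrightarrow> i = pred" if "i < L" for i
        using inj[of "(i + 1) mod L" k] k mod_Suc_eq_iff[OF that k(1)] that
        unfolding pred_def by simp
      ultimately show ?thesis by blast
    qed
    also have "\<dots> \<longleftrightarrow> u = c ! succ \<or> u = c ! pred"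
      using k \<open>pred < L\<close> unfolding succ_def by auto
    finally show ?thesis .
  qed
  then have "cycle_neighbours c v = {c ! succ, c ! pred}" by blast
  moreover have "c ! succ \<noteq> c ! pred"
    using inj \<open>succ < L\<close> \<open>pred < L\<close> mod_Suc_neq_mod_pred[OF k(1) \<open>3 \<le> L\<close>]
    unfolding succ_def pred_def by blast
  ultimately show ?thesis by simp
qed

lemma two_of_three:
  assumes "card A = 2 \<or> A = {}" "A \<subseteq> {a, b, c}" "a \<noteq> b" "a \<noteq> c" "b \<noteq> c"
  shows "(c \<in> A \<longleftrightarrow> (a \<in> A) \<noteq> (b \<in> A))" "(A \<noteq> {} \<longleftrightarrow> a \<in> A \<or> b \<in> A)"
  using assms by (auto simp: card_2_iff subset_iff)

lemma toggle_sequence_unique: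
  assumes "\<And>t. Suc t < n \<Longrightarrow> f (Suc t) = (f t \<noteq> T t)"
    and "\<And>t. Suc t < n \<Longrightarrow> g (Suc t) = (g t \<noteq> T t)"
    and "f 0 = g 0" and "t < n"
  shows "f t = g t"
  using assms(4) by (induction t) (simp_all add: assms(1-3))

lemma hbw_edges_path_edge: "Suc t < length P \<Longrightarrow> {P ! t, P ! Suc t} \<in> hbw_edges P h"
  unfolding hbw_edges_def by auto

lemma hbw_edges_hub_edge: "t < length P \<Longrightarrow> even t \<Longrightarrow> {h, P ! t} \<in> hbw_edges P h"
  unfolding hbw_edges_def by auto

lemma hbw_edges_subset: "e \<in> hbw_edges P h \<Longrightarrow> e \<subseteq> set P \<union> {h}"
  unfolding hbw_edges_def by auto

lemma hbw_edges_cases: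
  assumes "e \<in> hbw_edges P h"
  obtains (path) i where "e = {P ! i, P ! Suc i}" "Suc i < length P"
    | (hub) i where "e = {h, P ! i}" "i < length P" "even i"
  using assms unfolding hbw_edges_def Suc_eq_plus1 by blast

lemma hbw_edges_path_neighbour:
  assumes "distinct P" "h \<notin> set P" "t < length P" "{P ! t, u} \<in> hbw_edges P h"
  shows "(0 < t \<and> u = P ! (t - 1)) \<or> (Suc t < length P \<and> u = P ! Suc t) \<or> (even t \<and> u = h)"
proof -
  have inj: "P ! a = P ! b \<longleftrightarrow> a = b" if "a < length P" "b < length P" for a b
    using assms(1) that by (simp add: nth_eq_iff_index_eq)
  from assms(4) show ?thesis
  proof (cases rule: hbw_edges_cases)
    case (path i)
    then have "(P ! t = P ! i \<and> u = P ! Suc i) \<or> (P ! t = P ! Suc i \<and> u = P ! i)"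
      by (simp add: doubleton_eq_iff)
    then have "(t = i \<and> u = P ! Suc i) \<or> (t = Suc i \<and> u = P ! i)"
      using inj[of t i] inj[of t "Suc i"] assms(3) path(2) by auto
    then show ?thesis using path(2) by auto
  next
    case (hub i)
    then have "P ! t = P ! i \<and> u = h"
      using assms(2,3) nth_mem by (fastforce simp: doubleton_eq_iff)
    then show ?thesis using inj[of t i] assms(3) hub by auto
  qed
qed

lemma hbw_edges_hub_neighbour:
  assumes "h \<notin> set P" "{h, u} \<in> hbw_edges P h"
  shows "\<exists>t<length P. even t \<and> u = P ! t"
  using assms unfolding hbw_edges_def
  by (auto simp: doubleton_eq_iff)

lemma card_hbw_inter:
  assumes "distinct P" "h \<notin> set P"
  shows "card (S \<inter> (set P \<union> {h})) = (if h \<in> S then 1 else 0) + card {t. t < length P \<and> P ! t \<in> S}"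
proof -
  have "S \<inter> set P = (!) P ` {t. t < length P \<and> P ! t \<in> S}"
    by (auto simp: in_set_conv_nth)
  moreover have "inj_on ((!) P) {t. t < length P \<and> P ! t \<in> S}"
    using assms(1) by (auto simp: inj_on_def nth_eq_iff_index_eq)
  ultimately have "card (S \<inter> set P) = card {t. t < length P \<and> P ! t \<in> S}"
    by (simp add: card_image)
  moreover have "S \<inter> (set P \<union> {h}) = (if h \<in> S then insert h (S \<inter> set P) else S \<inter> set P)"
    by auto
  ultimately show ?thesis using assms(2) by simp
qed

lemma has_perfect_matching_hbw:
  assumes "distinct P" "odd (length P)" "h \<notin> set P"
  shows "has_perfect_matching (set P \<union> {h}) (hbw_edges P h)"
proof -
  have "0 < length P" using assms(2) by (rule odd_pos)
  then have "{0..<length P} = insert 0 {1..<length P}" by auto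
  then have "set P = insert (P ! 0) ((!) P ` {1..<length P})"
    using nth_image[of "length P" P] by simp
  then have split: "set P \<union> {h} = {h, P ! 0} \<union> (!) P ` {1..<length P}"
    by auto
  have "has_perfect_matching {h, P ! 0} (hbw_edges P h)"
    using assms(3) \<open>0 < length P\<close> by (intro has_perfect_matching_edge hbw_edges_hub_edge) auto
  moreover have "has_perfect_matching ((!) P ` {1..<length P}) (hbw_edges P h)"
    using assms(1,2) \<open>0 < length P\<close>
    by (intro has_perfect_matching_path_segment hbw_edges_path_edge) (auto simp: Suc_le_eq)
  moreover have "{h, P ! 0} \<inter> (!) P ` {1..<length P} = {}"
    using assms(1,3) \<open>0 < length P\<close> by (auto simp: nth_eq_iff_index_eq)
  ultimately show ?thesis unfolding split by (rule has_perfect_matching_Un)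
qed

lemma has_perfect_matching_hbw_minus_interval:
  assumes "distinct P" "odd (length P)" "h \<notin> set P" "h \<in> S"
    and "even i" "even j" "i \<le> j" "j < length P"
    and S: "\<And>t. t < length P \<Longrightarrow> P ! t \<in> S \<longleftrightarrow> i \<le> t \<and> t \<le> j"
  shows "has_perfect_matching ((set P \<union> {h}) - S) (hbw_edges P h)"
proof -
  have "(set P \<union> {h}) - S = (!) P ` {t. t < length P \<and> P ! t \<notin> S}"
    using assms(4) by (auto simp: in_set_conv_nth)
  also have "{t. t < length P \<and> P ! t \<notin> S} = {0..<i} \<union> {Suc j..<length P}"
    using assms(7,8) S by auto
  finally have split: "(set P \<union> {h}) - S = (!) P ` {0..<i} \<union> (!) P ` {Suc j..<length P}"
    by (simp add: image_Un)
  have "has_perfect_matching ((!) P ` {0..<i}) (hbw_edges P h)"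
    using assms(1,5,7,8) by (intro has_perfect_matching_path_segment hbw_edges_path_edge) auto
  moreover have "has_perfect_matching ((!) P ` {Suc j..<length P}) (hbw_edges P h)"
    using assms(1,2,6,8) by (intro has_perfect_matching_path_segment hbw_edges_path_edge) auto
  moreover have "(!) P ` {0..<i} \<inter> (!) P ` {Suc j..<length P} = {}"
    using assms(1,7,8) by (auto simp: nth_eq_iff_index_eq)
  ultimately show ?thesis unfolding split by (rule has_perfect_matching_Un)
qed

lemma hbw_edge_in_square:
  assumes "odd (length P)" "3 \<le> length P" "e \<in> hbw_edges P h"
  shows "\<exists>j. 2 * j + 2 < length P \<and>
    e \<in> {{h, P ! (2 * j)}, {P ! (2 * j), P ! (2 * j + 1)}, {P ! (2 * j + 1), P ! (2 * j + 2)}, {P ! (2 * j + 2), h}}"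
  using assms(3)
proof (cases rule: hbw_edges_cases)
  case (path t)
  show ?thesis
  proof (cases "even t")
    case True
    then have "t + 2 < length P" using path(2) assms(1) by presburger
    then show ?thesis using True path(1) by (intro exI[of _ "t div 2"]) auto
  next
    case False
    then show ?thesis using path by (intro exI[of _ "t div 2"]) (auto elim!: oddE)
  qed
next
  case (hub i)
  show ?thesis
  proof (cases "i + 2 < length P")
    case True
    then show ?thesis using hub by (intro exI[of _ "i div 2"]) auto
  next
    case False
    then have "i = 2 * (i div 2 - 1) + 2" using hub(2,3) assms(2) by presburger
    then show ?thesis using hub by (intro exI[of _ "i div 2 - 1"]) auto
  qed
qed

lemma hbw_hub_reaches:
  assumes V: "set P \<union> {h} \<subseteq> V" and E: "hbw_edges P h \<subseteq> E" and x: "x \<in> set P \<union> {h}"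
  shows "(h, x) \<in> {(a, b). a \<in> V \<and> b \<in> V \<and> {a, b} \<in> E}\<^sup>*"
proof -
  let ?R = "{(a, b). a \<in> V \<and> b \<in> V \<and> {a, b} \<in> E}"
  have hub: "(h, P ! t) \<in> ?R" if "t < length P" "even t" for t
    using hbw_edges_hub_edge[OF that] that V E by auto
  consider "x = h" | t where "t < length P" "x = P ! t" using x by (auto simp: in_set_conv_nth)
  then show ?thesis
  proof cases
    case (2 t)
    show ?thesis
    proof (cases "even t")
      case True
      then show ?thesis using hub 2 by auto
    next
      case False
      then obtain r where r: "t = Suc r" "even r" by (auto elim: oddE)
      have "(P ! r, P ! t) \<in> ?R"
        using hbw_edges_path_edge[of r P h] 2 r V E by auto
      then show ?thesis using hub[of r] 2 r by (meson Suc_lessD rtrancl.simps r_into_rtrancl rtrancl_into_rtrancl)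
    qed
  qed simp
qed

(* N v is the set of the two neighbours of v on an even cycle with vertex set S (empty for v outside S);
   o0 and ot are the outside neighbours of the ends of the path, y1 and y2 those of the hub. *)
locale half_biwheel_trace =
  fixes P :: "'a list" and h :: 'a and S :: "'a set" and N :: "'a \<Rightarrow> 'a set"
    and o0 ot y1 y2 :: 'a
  assumes distinct_ext: "distinct (o0 # P @ [ot])"
    and hub_notin_ext: "h \<notin> set (o0 # P @ [ot])"
    and odd_length: "odd (length P)"
    and hub_ports: "y1 \<notin> set P" "y2 \<notin> set P" "y1 \<noteq> y2"
    and N_card: "\<And>v. v \<in> S \<Longrightarrow> card (N v) = 2"
    and N_empty: "\<And>v. v \<notin> S \<Longrightarrow> N v = {}"
    and N_sym: "\<And>u v. u \<in> N v \<longleftrightarrow> v \<in> N u"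
    and N_path: "\<And>t u. t < length P \<Longrightarrow> u \<in> N (P ! t) \<Longrightarrow>
      (0 < t \<and> u = P ! (t - 1)) \<or> (Suc t < length P \<and> u = P ! Suc t) \<or> (even t \<and> u = h)
      \<or> (t = 0 \<and> u = o0) \<or> (Suc t = length P \<and> u = ot)"
    and N_hub: "\<And>u. u \<in> N h \<Longrightarrow> u = y1 \<or> u = y2 \<or> (\<exists>t<length P. even t \<and> u = P ! t)"
begin

(* The path padded with the outside neighbours of its ends, so that the neighbours of P ! t on the
   padded path are Q ! t and Q ! Suc (Suc t). *)
definition Q :: "'a list" where "Q = o0 # P @ [ot]"

definition left_used :: "nat \<Rightarrow> bool" where "left_used t \<longleftrightarrow> Q ! t \<in> N (P ! t)"

definition hub_positions :: "nat set" where
  "hub_positions = {t. t < length P \<and> h \<in> N (P ! t)}"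

lemma distinct_P: "distinct P" and hub_notin: "h \<notin> set P"
  using distinct_ext hub_notin_ext by auto

lemma Q_0: "Q ! 0 = o0" and Q_Suc: "t < length P \<Longrightarrow> Q ! Suc t = P ! t"
  and Q_last: "Q ! Suc (length P) = ot"
  unfolding Q_def by (auto simp: nth_append)

lemma N_path_slots:
  assumes "t < length P"
  shows "N (P ! t) \<subseteq> {Q ! t, h, Q ! Suc (Suc t)}"
    and "Q ! t \<noteq> h" "Q ! t \<noteq> Q ! Suc (Suc t)" "h \<noteq> Q ! Suc (Suc t)"
proof -
  show "N (P ! t) \<subseteq> {Q ! t, h, Q ! Suc (Suc t)}"
  proof
    fix u assume "u \<in> N (P ! t)"
    then show "u \<in> {Q ! t, h, Q ! Suc (Suc t)}"
      using N_path[OF assms \<open>u \<in> N (P ! t)\<close>] assms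
      by (elim disjE) (auto simp: Q_0 Q_Suc Q_last gr0_conv_Suc)
  qed
  have "t < length Q" "Suc (Suc t) < length Q" using assms unfolding Q_def by auto
  then have "Q ! t \<in> set Q" "Q ! Suc (Suc t) \<in> set Q" by simp_all
  moreover have "h \<notin> set Q" "distinct Q" using hub_notin_ext distinct_ext unfolding Q_def .
  ultimately show "Q ! t \<noteq> h" "Q ! t \<noteq> Q ! Suc (Suc t)" "h \<noteq> Q ! Suc (Suc t)"
    using \<open>Suc (Suc t) < length Q\<close> by (auto simp: nth_eq_iff_index_eq)
qed

(* P ! t uses none or two of its three slots Q ! t, h and Q ! Suc (Suc t); by symmetry of N, its
   right slot is used iff the left slot of P ! Suc t is. *)
lemma in_S_iff: "t < length P \<Longrightarrow> P ! t \<in> S \<longleftrightarrow> left_used t \<or> t \<in> hub_positions"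
  and left_used_Suc: "Suc t < length P \<Longrightarrow> left_used (Suc t) \<longleftrightarrow> left_used t \<noteq> (t \<in> hub_positions)"
proof -
  have two: "card (N v) = 2 \<or> N v = {}" and S_iff: "v \<in> S \<longleftrightarrow> N v \<noteq> {}" for v
    using N_card[of v] N_empty[of v] by auto
  note rules = two_of_three[OF two N_path_slots]
  show "P ! t \<in> S \<longleftrightarrow> left_used t \<or> t \<in> hub_positions" if "t < length P"
    using rules(2)[OF that that that that] S_iff that unfolding left_used_def hub_positions_def by simp
  show "left_used (Suc t) \<longleftrightarrow> left_used t \<noteq> (t \<in> hub_positions)" if "Suc t < length P"
    using rules(1)[of t] that N_sym[of "P ! t" "P ! Suc t"] unfolding left_used_def hub_positions_def
    by (simp add: Q_Suc)
qed

lemma hub_positions_iff: "t \<in> hub_positions \<longleftrightarrow> t < length P \<and> P ! t \<in> N h"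
  unfolding hub_positions_def using N_sym by blast

lemma hub_positions_even: "t \<in> hub_positions \<Longrightarrow> even t"
proof -
  assume t: "t \<in> hub_positions"
  then have "t < length P" "h \<in> N (P ! t)" unfolding hub_positions_def by auto
  moreover have "h \<noteq> P ! s" if "s < length P" for s
    using hub_notin that by auto
  ultimately show "even t" using N_path[of t h] hub_notin_ext by fastforce
qed

lemma N_hub_eq: "N h = (!) P ` hub_positions \<union> (N h \<inter> {y1, y2})"
  using N_hub hub_positions_iff by auto

lemma finite_hub_positions: "finite hub_positions"
  unfolding hub_positions_def by simp

lemma card_hub_positions:
  assumes "h \<in> S"
  shows "card hub_positions + card (N h \<inter> {y1, y2}) = 2"
proof -
  have inj: "inj_on ((!) P) hub_positions"
    using distinct_P hub_positions_iff by (simp add: inj_on_nth)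
  have "(!) P ` hub_positions \<subseteq> set P" unfolding hub_positions_def by auto
  then have disj: "(!) P ` hub_positions \<inter> (N h \<inter> {y1, y2}) = {}" using hub_ports by auto
  have "card (N h) = card ((!) P ` hub_positions \<union> (N h \<inter> {y1, y2}))"
    using N_hub_eq by (rule arg_cong)
  also have "\<dots> = card hub_positions + card (N h \<inter> {y1, y2})"
    using finite_hub_positions disj by (simp add: card_Un_disjoint card_image[OF inj])
  finally show ?thesis using N_card[OF assms] by simp
qed

lemma hub_cases:
  obtains (none) "hub_positions = {}" "h \<notin> S" "y1 \<notin> N h" "y2 \<notin> N h"
    | (ports) "hub_positions = {}" "h \<in> S" "y1 \<in> N h" "y2 \<in> N h"
    | (one) p where "hub_positions = {p}" "h \<in> S"
    | (two) p q where "hub_positions = {p, q}" "p < q" "y1 \<notin> N h" "y2 \<notin> N h"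
proof (cases "h \<in> S")
  case False
  then have "N h = {}" by (rule N_empty)
  then have "hub_positions = {}" using hub_positions_iff by blast
  then show ?thesis using none False \<open>N h = {}\<close> by simp
next
  case True
  note sum = card_hub_positions[OF True]
  have "card (N h \<inter> {y1, y2}) \<le> card {y1, y2}" by (rule card_mono) auto
  then have "card (N h \<inter> {y1, y2}) \<le> 2" using hub_ports(3) by simp
  with sum have "(card hub_positions = 0 \<and> card (N h \<inter> {y1, y2}) = 2) \<or> card hub_positions = 1
      \<or> (card hub_positions = 2 \<and> card (N h \<inter> {y1, y2}) = 0)"
    by arith
  then show ?thesis
  proof (elim disjE conjE)
    assume "card hub_positions = 0" "card (N h \<inter> {y1, y2}) = 2"
    then have "hub_positions = {}" "N h \<inter> {y1, y2} = {y1, y2}"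
      using finite_hub_positions hub_ports(3) by (simp, intro card_subset_eq) auto
    then show ?thesis using ports True by auto
  next
    assume "card hub_positions = 1"
    then show ?thesis using one True by (auto simp: card_1_singleton_iff)
  next
    assume "card hub_positions = 2" "card (N h \<inter> {y1, y2}) = 0"
    then have "N h \<inter> {y1, y2} = {}" by simp
    moreover obtain p q where "hub_positions = {p, q}" "p \<noteq> q"
      using \<open>card hub_positions = 2\<close> by (auto simp: card_2_iff)
    ultimately show ?thesis
      using two[of p q] two[of q p] by (auto simp: insert_commute dest: linorder_neqE_nat)
  qed
qed

lemma left_used_eq:
  assumes "g 0 = left_used 0" "\<And>t. Suc t < length P \<Longrightarrow> g (Suc t) = (g t \<noteq> (t \<in> hub_positions))"
    and "t < length P"
  shows "left_used t = g t"
  by (rule toggle_sequence_unique[where T = "\<lambda>t. t \<in> hub_positions"]) (use left_used_Suc assms in auto)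

abbreviation even_matchable :: bool where
  "even_matchable \<equiv> even (card (S \<inter> (set P \<union> {h})))
     \<and> has_perfect_matching ((set P \<union> {h}) - S) (hbw_edges P h)"

abbreviation odd_crossing :: bool where
  "odd_crossing \<equiv> odd (card (S \<inter> (set P \<union> {h})))
     \<and> (y1 \<in> N h \<longleftrightarrow> y2 \<in> N h) \<and> (o0 \<in> N (P ! 0) \<longleftrightarrow> y1 \<notin> N h)"

lemma card_S_inter_side: "card (S \<inter> (set P \<union> {h})) = (if h \<in> S then 1 else 0) + card {t. t < length P \<and> P ! t \<in> S}"
  by (rule card_hbw_inter[OF distinct_P hub_notin])

lemma o0_used: "o0 \<in> N (P ! 0) \<longleftrightarrow> left_used 0"
  by (simp add: left_used_def Q_0)

lemma last_index_even: "length P - 1 < length P" "even (length P - 1)"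
  using odd_length by (auto elim: oddE)

lemma even_matchable_interval:
  assumes "h \<in> S" "even i" "even j" "i \<le> j" "j < length P"
    and S: "\<And>t. t < length P \<Longrightarrow> P ! t \<in> S \<longleftrightarrow> i \<le> t \<and> t \<le> j"
  shows even_matchable
proof
  have "{t. t < length P \<and> P ! t \<in> S} = {i..j}" using assms(5) S by auto
  then show "even (card (S \<inter> (set P \<union> {h})))" using card_S_inter_side assms(1-4) by simp
  show "has_perfect_matching ((set P \<union> {h}) - S) (hbw_edges P h)"
    by (rule has_perfect_matching_hbw_minus_interval[OF distinct_P odd_length hub_notin assms])
qed

lemma even_matchable_untouched:
  assumes "h \<notin> S" "\<And>t. t < length P \<Longrightarrow> P ! t \<notin> S"
  shows even_matchable
proof -
  have "S \<inter> (set P \<union> {h}) = {}" using assms by (auto simp: in_set_conv_nth)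
  then have "(set P \<union> {h}) - S = set P \<union> {h}" by blast
  then show ?thesis
    using has_perfect_matching_hbw[OF distinct_P odd_length hub_notin] \<open>S \<inter> (set P \<union> {h}) = {}\<close>
    by simp
qed

lemma dichotomy_without_hub_positions:
  assumes "hub_positions = {}" "y1 \<in> N h \<longleftrightarrow> h \<in> S" "y2 \<in> N h \<longleftrightarrow> h \<in> S"
  shows "even_matchable \<or> odd_crossing"
proof -
  have S: "P ! t \<in> S \<longleftrightarrow> left_used 0" if "t < length P" for t
    using left_used_eq[of "\<lambda>_. left_used 0" t] in_S_iff[OF that] assms(1) that by simp
  consider "left_used 0" "h \<in> S" | "left_used 0" "h \<notin> S" | "\<not> left_used 0" "h \<in> S"
    | "\<not> left_used 0" "h \<notin> S" by blast
  then show ?thesis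
  proof cases
    case 1
    show ?thesis
      by (rule disjI1, rule even_matchable_interval[of 0 "length P - 1"]) (use 1 S last_index_even in auto)
  next
    case 2
    then have idx: "{t. t < length P \<and> P ! t \<in> S} = {..<length P}" using S by auto
    show ?thesis using 2 assms(2,3) odd_length o0_used card_S_inter_side[unfolded idx] by simp
  next
    case 3
    then have idx: "{t. t < length P \<and> P ! t \<in> S} = {}" using S by auto
    show ?thesis using 3 assms(2,3) o0_used card_S_inter_side[unfolded idx] by simp
  next
    case 4
    show ?thesis by (rule disjI1, rule even_matchable_untouched) (use 4 S in auto)
  qed
qed

lemma even_matchable_one_hub_position:
  assumes "hub_positions = {p}" "h \<in> S"
  shows even_matchable
proof -
  have p: "p < length P" "even p" using assms(1) hub_positions_even unfolding hub_positions_def by auto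
  define b where "b = left_used 0"
  have "left_used t = (b \<noteq> (p < t))" if "t < length P" for t
    by (rule left_used_eq[where g = "\<lambda>t. b \<noteq> (p < t)", OF _ _ that]) (auto simp: b_def assms(1))
  then have S: "P ! t \<in> S \<longleftrightarrow> (if b then t \<le> p else p \<le> t)" if "t < length P" for t
    using in_S_iff[OF that] that unfolding assms(1) by auto
  show ?thesis
  proof (cases b)
    case True
    show ?thesis by (rule even_matchable_interval[of 0 p]) (use True assms(2) p S in auto)
  next
    case False
    show ?thesis
      by (rule even_matchable_interval[of p "length P - 1"]) (use False assms(2) p S last_index_even in auto)
  qed
qed

lemma dichotomy_two_hub_positions:
  assumes "hub_positions = {p, q}" "p < q" "y1 \<notin> N h" "y2 \<notin> N h"
  shows "even_matchable \<or> odd_crossing"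
proof -
  have pq: "q < length P" "even p" "even q" using assms(1) hub_positions_even unfolding hub_positions_def by auto
  have "h \<in> S" using assms(1) N_empty hub_positions_iff by blast
  define b where "b = left_used 0"
  have "left_used t = (b \<noteq> (p < t \<and> t \<le> q))" if "t < length P" for t
    by (rule left_used_eq[where g = "\<lambda>t. b \<noteq> (p < t \<and> t \<le> q)", OF _ _ that])
      (use assms(2) in \<open>auto simp: b_def assms(1)\<close>)
  then have S: "P ! t \<in> S \<longleftrightarrow> (if b then t \<le> p \<or> q \<le> t else p \<le> t \<and> t \<le> q)"
    if "t < length P" for t
    using in_S_iff[OF that] assms(2) that unfolding assms(1) by auto
  show ?thesis
  proof (cases b)
    case True
    then have idx: "{t. t < length P \<and> P ! t \<in> S} = {..p} \<union> {q..<length P}"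
      using S pq assms(2) by auto
    have "card ({..p} \<union> {q..<length P}) = Suc p + (length P - q)"
      using assms(2) by (subst card_Un_disjoint) auto
    then have "card (S \<inter> (set P \<union> {h})) = Suc (Suc p) + (length P - q)"
      using card_S_inter_side[unfolded idx] \<open>h \<in> S\<close> by simp
    then show ?thesis using True pq odd_length assms(3,4) o0_used unfolding b_def by auto
  next
    case False
    show ?thesis
      by (rule disjI1, rule even_matchable_interval[of p q]) (use False \<open>h \<in> S\<close> pq assms(2) S in auto)
  qed
qed

theorem dichotomy: "even_matchable \<or> odd_crossing"
proof (cases rule: hub_cases)
  case none
  then show ?thesis by (intro dichotomy_without_hub_positions) auto
next
  case ports
  then show ?thesis by (intro dichotomy_without_hub_positions) auto
next
  case (one p)
  then show ?thesis using even_matchable_one_hub_position by blast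
next
  case (two p q)
  then show ?thesis by (intro dichotomy_two_hub_positions)
qed

end

locale double_half_biwheel =
  fixes P0 :: "'a list" and h0 :: 'a and P1 :: "'a list" and h1 :: 'a
    and V :: "'a set" and E :: "'a set set"
  assumes hbw0: "is_half_biwheel_path P0 h0" and hbw1: "is_half_biwheel_path P1 h1"
    and length0: "3 \<le> length P0" and length1: "3 \<le> length P1"
    and disjoint: "(set P0 \<union> {h0}) \<inter> (set P1 \<union> {h1}) = {}"
    and V_eq: "V = set P0 \<union> {h0} \<union> set P1 \<union> {h1}"
    and E_eq: "E = hbw_edges P0 h0 \<union> hbw_edges P1 h1 \<union>
      {{h1, h0}, {last P1, last P0}, {hd P0, h1}, {h0, hd P1}}"

lemma in_G2_iff: "in_G2 V E \<longleftrightarrow> (\<exists>P0 h0 P1 h1. double_half_biwheel P0 h0 P1 h1 V E)"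
  unfolding in_G2_def double_half_biwheel_def by blast

context double_half_biwheel
begin

lemma swap: "double_half_biwheel P1 h1 P0 h0 V E"
proof
  show "E = hbw_edges P1 h1 \<union> hbw_edges P0 h0 \<union> {{h0, h1}, {last P0, last P1}, {hd P1, h0}, {h1, hd P0}}"
    unfolding E_eq by (auto simp: insert_commute)
qed (use hbw0 hbw1 length0 length1 disjoint V_eq in auto)

lemma distinct0: "distinct P0" and odd0: "odd (length P0)" and h0_notin: "h0 \<notin> set P0"
  and h1_notin: "h1 \<notin> set P0" and h0_neq_h1: "h0 \<noteq> h1"
  using hbw0 disjoint unfolding is_half_biwheel_path_def by auto

lemma nonempty0: "P0 \<noteq> []" and nonempty1: "P1 \<noteq> []"
  using length0 length1 by auto

lemma hd0: "hd P0 = P0 ! 0" and last0: "last P0 = P0 ! (length P0 - 1)"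
  using nonempty0 by (simp_all add: hd_conv_nth last_conv_nth)

lemma path0_neighbour:
  assumes "t < length P0" "{P0 ! t, u} \<in> E"
  shows "(0 < t \<and> u = P0 ! (t - 1)) \<or> (Suc t < length P0 \<and> u = P0 ! Suc t) \<or> (even t \<and> u = h0)
    \<or> (t = 0 \<and> u = h1) \<or> (Suc t = length P0 \<and> u = last P1)"
proof -
  have "P0 ! t \<in> set P0" using assms(1) by simp
  then have out: "P0 ! t \<notin> set P1 \<union> {h1, h0}" using disjoint h0_notin by auto
  have inj: "P0 ! t = P0 ! s \<longleftrightarrow> t = s" if "s < length P0" for s
    using distinct0 assms(1) that by (simp add: nth_eq_iff_index_eq)
  have ends: "P0 ! t = hd P0 \<longleftrightarrow> t = 0" "P0 ! t = last P0 \<longleftrightarrow> Suc t = length P0"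
    using inj[of 0] inj[of "length P0 - 1"] nonempty0 length0 assms(1) unfolding hd0 last0 by auto
  have "hd P1 \<in> set P1" "last P1 \<in> set P1" using nonempty1 by simp_all
  with assms(2) out consider (own) "{P0 ! t, u} \<in> hbw_edges P0 h0" | (other) "{P0 ! t, u} \<in> hbw_edges P1 h1"
    | (top) "P0 ! t = last P0" "u = last P1" | (bottom) "P0 ! t = hd P0" "u = h1"
    unfolding E_eq by (auto simp: doubleton_eq_iff)
  then show ?thesis
  proof cases
    case own
    then show ?thesis using hbw_edges_path_neighbour[OF distinct0 h0_notin assms(1)] by blast
  next
    case other
    then show ?thesis using hbw_edges_subset[OF other] out by blast
  qed (use ends in auto)
qed

lemma hub0_neighbour:
  assumes "{h0, u} \<in> E"
  shows "u = h1 \<or> u = hd P1 \<or> (\<exists>t<length P0. even t \<and> u = P0 ! t)"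
proof -
  have out: "h0 \<notin> set P1 \<union> {h1}" using disjoint by auto
  have "hd P0 \<in> set P0" "last P0 \<in> set P0" "last P1 \<in> set P1" using nonempty0 nonempty1 by simp_all
  with assms out h0_notin consider (own) "{h0, u} \<in> hbw_edges P0 h0" | (other) "{h0, u} \<in> hbw_edges P1 h1"
    | (cross) "u = h1 \<or> u = hd P1"
    unfolding E_eq by (auto simp: doubleton_eq_iff)
  then show ?thesis
  proof cases
    case own
    then show ?thesis using hbw_edges_hub_neighbour[OF h0_notin] by blast
  next
    case other
    then show ?thesis using hbw_edges_subset[OF other] out by blast
  qed blast
qed

lemma half_biwheel_trace0:
  assumes "is_cycle V E c"
  shows "half_biwheel_trace P0 h0 (set c) (cycle_neighbours c) h1 (last P1) h1 (hd P1)"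
proof
  have "last P1 \<in> set P1" "hd P1 \<in> set P1" using nonempty1 by simp_all
  moreover have "h1 \<notin> set P1" using hbw1 unfolding is_half_biwheel_path_def by simp
  ultimately show "distinct (h1 # P0 @ [last P1])" "h0 \<notin> set (h1 # P0 @ [last P1])"
    "hd P1 \<notin> set P0" "h1 \<noteq> hd P1"
    using distinct0 h1_notin h0_notin disjoint by auto
  show "odd (length P0)" "h1 \<notin> set P0" by (fact odd0, fact h1_notin)
  show "card (cycle_neighbours c v) = 2" if "v \<in> set c" for v
    using card_cycle_neighbours[OF assms that] .
  show "cycle_neighbours c v = {}" if "v \<notin> set c" for v
    using cycle_neighbours_notin[OF that] .
  show "u \<in> cycle_neighbours c v \<longleftrightarrow> v \<in> cycle_neighbours c u" for u v
    by (rule cycle_neighbours_sym)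
  show "(0 < t \<and> u = P0 ! (t - 1)) \<or> (Suc t < length P0 \<and> u = P0 ! Suc t) \<or> (even t \<and> u = h0)
      \<or> (t = 0 \<and> u = h1) \<or> (Suc t = length P0 \<and> u = last P1)"
    if "t < length P0" "u \<in> cycle_neighbours c (P0 ! t)" for t u
    using path0_neighbour[OF that(1) cycle_neighbours_edge[OF assms that(2)]] .
  show "u = h1 \<or> u = hd P1 \<or> (\<exists>t<length P0. even t \<and> u = P0 ! t)"
    if "u \<in> cycle_neighbours c h0" for u
    using hub0_neighbour[OF cycle_neighbours_edge[OF assms that]] .
qed

theorem has_perfect_matching_minus_even_cycle:
  assumes "is_even_cycle V E c"
  shows "has_perfect_matching (V - set c) (del_vertices_edges E (set c))"
proof -
  have cyc: "is_cycle V E c" and "even (length c)" using assms unfolding is_even_cycle_def by auto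
  interpret swapped: double_half_biwheel P1 h1 P0 h0 V E by (rule swap)
  interpret side0: half_biwheel_trace P0 h0 "set c" "cycle_neighbours c" h1 "last P1" h1 "hd P1"
    by (rule half_biwheel_trace0[OF cyc])
  interpret side1: half_biwheel_trace P1 h1 "set c" "cycle_neighbours c" h0 "last P0" h0 "hd P0"
    by (rule swapped.half_biwheel_trace0[OF cyc])
  let ?A0 = "set P0 \<union> {h0}" and ?A1 = "set P1 \<union> {h1}"
  have "set c = (set c \<inter> ?A0) \<union> (set c \<inter> ?A1)" using cyc V_eq unfolding is_cycle_def by auto
  then have "card (set c) = card ((set c \<inter> ?A0) \<union> (set c \<inter> ?A1))" by (rule arg_cong)
  also have "\<dots> = card (set c \<inter> ?A0) + card (set c \<inter> ?A1)"
    by (rule card_Un_disjoint) (use disjoint in auto)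
  finally have "card (set c) = card (set c \<inter> ?A0) + card (set c \<inter> ?A1)" .
  moreover have "even (card (set c))"
    using \<open>even (length c)\<close> cyc distinct_card unfolding is_cycle_def by metis
  moreover have "\<not> (side0.odd_crossing \<and> side1.odd_crossing)"
  \<comment> \<open>side 0 would use the edge between h0 and hd P1 iff it uses h0 h1, side 1 iff it does not\<close>
  proof
    let ?N = "cycle_neighbours c"
    assume "side0.odd_crossing \<and> side1.odd_crossing"
    then have "h1 \<in> ?N h0 \<longleftrightarrow> hd P1 \<in> ?N h0" "h0 \<in> ?N (P1 ! 0) \<longleftrightarrow> h0 \<notin> ?N h1" by simp_all
    moreover have "hd P1 \<in> ?N h0 \<longleftrightarrow> h0 \<in> ?N (P1 ! 0)" "h1 \<in> ?N h0 \<longleftrightarrow> h0 \<in> ?N h1"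
      using cycle_neighbours_sym swapped.hd0 by metis+
    ultimately show False by blast
  qed
  ultimately have "side0.even_matchable" "side1.even_matchable"
    using side0.dichotomy side1.dichotomy by auto
  then have "has_perfect_matching ((?A0 - set c) \<union> (?A1 - set c)) E"
    using disjoint unfolding E_eq by (intro has_perfect_matching_Un) (auto elim: has_perfect_matching_mono)
  moreover have "V - set c = (?A0 - set c) \<union> (?A1 - set c)" using V_eq by auto
  ultimately show ?thesis by (auto intro: has_perfect_matching_del_vertices)
qed

lemma hbw0_edges_subset: "hbw_edges P0 h0 \<subseteq> E" and vertices0_subset: "set P0 \<union> {h0} \<subseteq> V"
  unfolding E_eq V_eq by auto

lemma hub0_square:
  assumes "2 * j + 2 < length P0"
  shows "is_cycle V E [h0, P0 ! (2 * j), P0 ! (2 * j + 1), P0 ! (2 * j + 2)]"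
proof (rule is_cycle_square)
  show "distinct [h0, P0 ! (2 * j), P0 ! (2 * j + 1), P0 ! (2 * j + 2)]"
    using assms distinct0 h0_notin by (auto simp: nth_eq_iff_index_eq)
  show "{h0, P0 ! (2 * j), P0 ! (2 * j + 1), P0 ! (2 * j + 2)} \<subseteq> V"
    using assms vertices0_subset by auto
  show "{h0, P0 ! (2 * j)} \<in> E" "{P0 ! (2 * j + 2), h0} \<in> E"
    using assms hbw_edges_hub_edge[of "2 * j" P0 h0] hbw_edges_hub_edge[of "2 * j + 2" P0 h0] hbw0_edges_subset
    by (auto simp: insert_commute)
  show "{P0 ! (2 * j), P0 ! (2 * j + 1)} \<in> E" "{P0 ! (2 * j + 1), P0 ! (2 * j + 2)} \<in> E"
    using assms hbw_edges_path_edge[of "2 * j" P0 h0] hbw_edges_path_edge[of "2 * j + 1" P0 h0] hbw0_edges_subset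
    by auto
qed

lemma hub0_end_edges: "{h0, hd P0} \<in> E" "{h0, last P0} \<in> E"
proof -
  have "even (length P0 - 1)" using odd0 by (auto elim: oddE)
  then show "{h0, hd P0} \<in> E" "{h0, last P0} \<in> E"
    using hbw_edges_hub_edge[of 0 P0 h0] hbw_edges_hub_edge[of "length P0 - 1" P0 h0]
      hbw0_edges_subset nonempty0 unfolding hd0 last0 by auto
qed

lemma cross_squares:
  "is_cycle V E [h0, h1, last P1, last P0]" "is_cycle V E [hd P0, h1, hd P1, h0]"
proof -
  interpret swapped: double_half_biwheel P1 h1 P0 h0 V E by (rule swap)
  have ends: "hd P0 \<in> set P0" "last P0 \<in> set P0" "hd P1 \<in> set P1" "last P1 \<in> set P1"
    using nonempty0 nonempty1 by simp_all
  then have distinct: "distinct [h0, h1, last P1, last P0]" "distinct [hd P0, h1, hd P1, h0]"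
    using disjoint h0_notin swapped.h0_notin by auto
  have cross: "{h0, h1} \<in> E" "{last P1, last P0} \<in> E" "{hd P0, h1} \<in> E" "{hd P1, h0} \<in> E"
    unfolding E_eq by (auto simp: insert_commute)
  show "is_cycle V E [h0, h1, last P1, last P0]"
    by (rule is_cycle_square)
      (use ends distinct cross hub0_end_edges swapped.hub0_end_edges V_eq in \<open>auto simp: insert_commute\<close>)
  show "is_cycle V E [hd P0, h1, hd P1, h0]"
    by (rule is_cycle_square)
      (use ends distinct cross hub0_end_edges swapped.hub0_end_edges V_eq in \<open>auto simp: insert_commute\<close>)
qed

lemma edge_in_square:
  assumes "e \<in> E"
  shows "\<exists>a b c d. is_cycle V E [a, b, c, d] \<and> e \<in> {{a, b}, {b, c}, {c, d}, {d, a}}"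
proof -
  interpret swapped: double_half_biwheel P1 h1 P0 h0 V E by (rule swap)
  from assms consider "e \<in> hbw_edges P0 h0" | "e \<in> hbw_edges P1 h1"
    | "e \<in> {{h1, h0}, {last P1, last P0}}" | "e \<in> {{hd P0, h1}, {h0, hd P1}}"
    unfolding E_eq by blast
  then show ?thesis
  proof cases
    case 1
    then obtain j where "2 * j + 2 < length P0"
      "e \<in> {{h0, P0 ! (2 * j)}, {P0 ! (2 * j), P0 ! (2 * j + 1)},
        {P0 ! (2 * j + 1), P0 ! (2 * j + 2)}, {P0 ! (2 * j + 2), h0}}"
      using hbw_edge_in_square[OF odd0 length0 1] by (elim exE conjE)
    then show ?thesis using hub0_square by meson
  next
    case 2
    then obtain j where "2 * j + 2 < length P1"
      "e \<in> {{h1, P1 ! (2 * j)}, {P1 ! (2 * j), P1 ! (2 * j + 1)},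
        {P1 ! (2 * j + 1), P1 ! (2 * j + 2)}, {P1 ! (2 * j + 2), h1}}"
      using hbw_edge_in_square[OF swapped.odd0 swapped.length0 2] by (elim exE conjE)
    then show ?thesis using swapped.hub0_square by meson
  next
    case 3
    then have "e \<in> {{h0, h1}, {h1, last P1}, {last P1, last P0}, {last P0, h0}}"
      by (auto simp: doubleton_eq_iff)
    then show ?thesis using cross_squares(1) by meson
  next
    case 4
    then have "e \<in> {{hd P0, h1}, {h1, hd P1}, {hd P1, h0}, {h0, hd P0}}"
      by (auto simp: doubleton_eq_iff)
    then show ?thesis using cross_squares(2) by meson
  qed
qed

lemma connected: "graph_connected V E"
proof (rule graph_connectedI)
  interpret swapped: double_half_biwheel P1 h1 P0 h0 V E by (rule swap)
  let ?R = "{(a, b). a \<in> V \<and> b \<in> V \<and> {a, b} \<in> E}"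
  fix x assume "x \<in> V"
  then consider "x \<in> set P0 \<union> {h0}" | "x \<in> set P1 \<union> {h1}" unfolding V_eq by blast
  then show "(h0, x) \<in> ?R\<^sup>*"
  proof cases
    case 1
    then show ?thesis by (rule hbw_hub_reaches[OF vertices0_subset hbw0_edges_subset])
  next
    case 2
    then have "(h1, x) \<in> ?R\<^sup>*"
      by (rule hbw_hub_reaches[OF swapped.vertices0_subset swapped.hbw0_edges_subset])
    moreover have "(h0, h1) \<in> ?R" unfolding V_eq E_eq by (auto simp: insert_commute)
    ultimately show ?thesis by (rule converse_rtrancl_into_rtrancl[rotated])
  qed
qed

lemma matching_covered: "matching_covered V E"
  unfolding matching_covered_def
proof (intro conjI ballI)
  show "graph_connected V E" by (rule connected)
  show "finite V" unfolding V_eq by simp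
  then show "2 \<le> card V"
    using card_mono[of V "{h0, h1}"] h0_neq_h1 unfolding V_eq by auto
  fix e assume "e \<in> E"
  then obtain a b c d where square: "is_cycle V E [a, b, c, d]" "e \<in> {{a, b}, {b, c}, {c, d}, {d, a}}"
    using edge_in_square[OF \<open>e \<in> E\<close>] by (elim exE conjE)
  then have "has_perfect_matching (V - {a, b, c, d}) (del_vertices_edges E {a, b, c, d})"
    using has_perfect_matching_minus_even_cycle[of "[a, b, c, d]"] unfolding is_even_cycle_def by simp
  then show "\<exists>M. perfect_matching V E M \<and> e \<in> M"
    using perfect_matching_through_square[OF square(1) _ square(2)] by blast
qed

theorem cycle_extendable: "cycle_extendable V E"
  unfolding cycle_extendable_def using matching_covered has_perfect_matching_minus_even_cycle by blast

end

theorem proposition5p11: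
  fixes V :: "'a set" and E :: "'a set set"
  assumes "in_G2 V E"
  shows "cycle_extendable V E"
proof -
  obtain P0 h0 P1 h1 where "double_half_biwheel P0 h0 P1 h1 V E"
    using assms unfolding in_G2_iff by blast
  then show ?thesis by (rule double_half_biwheel.cycle_extendable)
qed

end
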